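(* For every quasi-symmetric bimodal model $\mathcal{M}$ there exist a symmetric bimodal model $\mathcal{M}^+$ (both relations symmetric) and a surjective $\boxdot$-morphism $h$ from $\mathcal{M}^+$ onto $\mathcal{M}$; consequently, for every state $x$ of $\mathcal{M}^+$ and every $\phi\in\mathcal{L}(\boxdot)$, $\mathcal{M}^+,x\vDash\phi$ iff $\mathcal{M},h(x)\vDash\phi$.
   Context: Fix a nonempty set $\mathbf{P}$ of propositional variables. A bimodal model is $\langle S,R_1,R_2,V\rangle$ with $S$ nonempty, $R_1,R_2\subseteq S\times S$, $V:\mathbf{P}\to\mathcal{P}(S)$. It is quasi-symmetric if for all $i,j\in\{1,2\}$ and all $s,t\in S$ such that $tR_ju$ for some $u\in S$, $sR_it$ implies $tR_is$. $\mathcal{L}(\boxdot):\ \phi::=p\mid\neg\phi\mid(\phi\wedge\phi)\mid\boxdot\phi$, with $\mathcal{M},s\vDash\boxdot\phi$ iff for all $t,u$ with $sR_1t$ and $sR_2u$, ($\mathcal{M},t\vDash\phi\iff\mathcal{M},u\vDash\phi$); atoms and Booleans as usual. A function $f:S\to S'$ is a $\boxdot$-morphism from $\langle S,R_1,R_2,V\rangle$ to $\langle S',R_1',R_2',V'\rangle$ if for all $x\in S$: (Var) $x\in V(p)$ iff $f(x)\in V'(p)$ for all $p$; (Forth) for all $y,z\in S$, if $xR_1y$, $xR_2z$ and $f(y)\neq f(z)$, then $f(x)R_1'f(y)$ and $f(x)R_2'f(z)$; (Back) for all $y',z'\in S'$, if $f(x)R_1'y'$, $f(x)R_2'z'$ and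 $y'\neq z'$, then there are $y,z\in S$ with $xR_1y$, $xR_2z$, $f(y)=y'$, $f(z)=z'$. *)

theory Defs
  imports Main
begin

record ('s, 'p) bimodel =
  St :: "'s set"
  Rel1 :: "('s \<times> 's) set"
  Rel2 :: "('s \<times> 's) set"
  Val :: "'p \<Rightarrow> 's set"

definition wf_model :: "('s, 'p) bimodel \<Rightarrow> bool" where
  "wf_model M \<longleftrightarrow> St M \<noteq> {} \<and> Rel1 M \<subseteq> St M \<times> St M \<and> Rel2 M \<subseteq> St M \<times> St M
     \<and> (\<forall>p. Val M p \<subseteq> St M)"

definition rel :: "('s, 'p) bimodel \<Rightarrow> nat \<Rightarrow> ('s \<times> 's) set" where
  "rel M i = (if i = 1 then Rel1 M else Rel2 M)"

definition quasi_symmetric :: "('s, 'p) bimodel \<Rightarrow> bool" where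
  "quasi_symmetric M \<longleftrightarrow>
     (\<forall>i\<in>{1,2::nat}. \<forall>j\<in>{1,2::nat}. \<forall>s\<in>St M. \<forall>t\<in>St M.
        (\<exists>u\<in>St M. (t, u) \<in> rel M j) \<longrightarrow> (s, t) \<in> rel M i \<longrightarrow> (t, s) \<in> rel M i)"

definition symmetric_model :: "('s, 'p) bimodel \<Rightarrow> bool" where
  "symmetric_model M \<longleftrightarrow> sym (Rel1 M) \<and> sym (Rel2 M)"

datatype 'p fml = Atom 'p | Neg "'p fml" | Conj "'p fml" "'p fml" | Dot "'p fml"

fun sat :: "('s, 'p) bimodel \<Rightarrow> 's \<Rightarrow> 'p fml \<Rightarrow> bool" where
  "sat M s (Atom p) \<longleftrightarrow> s \<in> Val M p"
| "sat M s (Neg \<phi>) \<longleftrightarrow> \<not> sat M s \<phi>"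
| "sat M s (Conj \<phi> \<psi>) \<longleftrightarrow> sat M s \<phi> \<and> sat M s \<psi>"
| "sat M s (Dot \<phi>) \<longleftrightarrow>
     (\<forall>t u. (s, t) \<in> Rel1 M \<longrightarrow> (s, u) \<in> Rel2 M \<longrightarrow> (sat M t \<phi> \<longleftrightarrow> sat M u \<phi>))"

definition dot_morphism :: "('s, 'p) bimodel \<Rightarrow> ('t, 'p) bimodel \<Rightarrow> ('s \<Rightarrow> 't) \<Rightarrow> bool" where
  "dot_morphism M M' f \<longleftrightarrow>
     (\<forall>x\<in>St M. f x \<in> St M') \<and>
     (\<forall>x\<in>St M.
        (\<forall>p. x \<in> Val M p \<longleftrightarrow> f x \<in> Val M' p) \<and>
        (\<forall>y\<in>St M. \<forall>z\<in>St M. (x, y) \<in> Rel1 M \<longrightarrow> (x, z) \<in> Rel2 M \<longrightarrow> f y \<noteq> f z \<longrightarrow>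
            (f x, f y) \<in> Rel1 M' \<and> (f x, f z) \<in> Rel2 M') \<and>
        (\<forall>y'\<in>St M'. \<forall>z'\<in>St M'. (f x, y') \<in> Rel1 M' \<longrightarrow> (f x, z') \<in> Rel2 M' \<longrightarrow> y' \<noteq> z' \<longrightarrow>
            (\<exists>y\<in>St M. \<exists>z\<in>St M. (x, y) \<in> Rel1 M \<and> (x, z) \<in> Rel2 M \<and> f y = y' \<and> f z = z')))"

end

theory Submission
  imports Defs
begin

text \<open>In a quasi-symmetric model every edge is symmetric unless it ends in a dead end, i.e. a
  state without successors. Unravel each edge \<open>s R\<^sub>i t\<close> into a dead end \<open>t\<close> by a fresh copy of
  \<open>t\<close> attached to \<open>s\<close> only, and symmetrise. The copies have a single neighbour, so
  \<open>\<boxdot>\<phi>\<close> holds vacuously there, just as it does at the dead end \<open>t\<close> itself; hence projecting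
  copies onto the states they copy is a surjective \<open>\<boxdot>\<close>-morphism, and \<open>\<boxdot>\<close>-morphisms preserve
  truth.\<close>

lemma dot_morphism_sat_iff:
  assumes wf: "wf_model M" "wf_model M'" and f: "dot_morphism M M' f" and x: "x \<in> St M"
  shows "sat M x \<phi> \<longleftrightarrow> sat M' (f x) \<phi>"
  using x
proof (induction \<phi> arbitrary: x)
  case (Atom p)
  then show ?case using f by (simp add: dot_morphism_def)
next
  case (Dot \<phi>)
  have in_St: "y \<in> St M" "z \<in> St M" if "(x, y) \<in> Rel1 M" "(x, z) \<in> Rel2 M" for y z
    using that wf(1) by (auto simp: wf_model_def)
  have in_St': "y' \<in> St M'" "z' \<in> St M'" if "(f x, y') \<in> Rel1 M'" "(f x, z') \<in> Rel2 M'" for y' z'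
    using that wf(2) by (auto simp: wf_model_def)
  show ?case
  proof
    assume L: "sat M x (Dot \<phi>)"
    show "sat M' (f x) (Dot \<phi>)" unfolding sat.simps
    proof (intro allI impI)
      fix y' z' assume y': "(f x, y') \<in> Rel1 M'" and z': "(f x, z') \<in> Rel2 M'"
      show "sat M' y' \<phi> \<longleftrightarrow> sat M' z' \<phi>"
      proof (cases "y' = z'")
        case False
        then obtain y z where "(x, y) \<in> Rel1 M" "(x, z) \<in> Rel2 M" "f y = y'" "f z = z'"
          using f Dot.prems in_St'[OF y' z'] y' z' unfolding dot_morphism_def by blast
        with L in_St Dot.IH show ?thesis by auto
      qed simp
    qed
  next
    assume R: "sat M' (f x) (Dot \<phi>)"
    show "sat M x (Dot \<phi>)" unfolding sat.simps
    proof (intro allI impI)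
      fix y z assume y: "(x, y) \<in> Rel1 M" and z: "(x, z) \<in> Rel2 M"
      have "sat M' (f y) \<phi> \<longleftrightarrow> sat M' (f z) \<phi>"
      proof (cases "f y = f z")
        case False
        then have "(f x, f y) \<in> Rel1 M'" "(f x, f z) \<in> Rel2 M'"
          using f Dot.prems in_St[OF y z] y z unfolding dot_morphism_def by blast+
        with R show ?thesis by simp
      qed simp
      with Dot.IH in_St[OF y z] show "sat M y \<phi> \<longleftrightarrow> sat M z \<phi>" by blast
    qed
  qed
qed simp_all

definition dead_end :: "('s, 'p) bimodel \<Rightarrow> 's \<Rightarrow> bool" where
  "dead_end M t \<longleftrightarrow> (\<forall>u. (t, u) \<notin> Rel1 M \<union> Rel2 M)"

text \<open>A state \<open>s\<close> of \<open>M\<close> is represented by \<open>[(0, s)]\<close>; for an edge \<open>s R\<^sub>i t\<close> into a dead end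
  \<open>t\<close>, the list \<open>[(i, t), (0, s)]\<close> is the fresh copy of \<open>t\<close> hanging off \<open>s\<close>.\<close>

definition unravel_states :: "('s, 'p) bimodel \<Rightarrow> (nat \<times> 's) list set" where
  "unravel_states M = {[(0, s)] | s. s \<in> St M}
     \<union> {[(i, t), (0, s)] | i s t. i \<in> {1, 2} \<and> (s, t) \<in> rel M i \<and> dead_end M t}"

definition unravel_edges :: "('s, 'p) bimodel \<Rightarrow> nat \<Rightarrow> ((nat \<times> 's) list \<times> (nat \<times> 's) list) set" where
  "unravel_edges M i = {([(0, s)], [(0, t)]) | s t. (s, t) \<in> rel M i \<and> \<not> dead_end M t}
     \<union> {([(0, s)], [(i, t), (0, s)]) | s t. (s, t) \<in> rel M i \<and> dead_end M t}"

definition unravel :: "('s, 'p) bimodel \<Rightarrow> ((nat \<times> 's) list, 'p) bimodel" where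
  "unravel M = \<lparr>St = unravel_states M,
     Rel1 = unravel_edges M 1 \<union> (unravel_edges M 1)\<inverse>,
     Rel2 = unravel_edges M 2 \<union> (unravel_edges M 2)\<inverse>,
     Val = (\<lambda>p. {x \<in> unravel_states M. snd (hd x) \<in> Val M p})\<rparr>"

definition unravel_proj :: "(nat \<times> 's) list \<Rightarrow> 's" where
  "unravel_proj x = snd (hd x)"

lemma Rel_eq_rel: "Rel1 M = rel M 1" "Rel2 M = rel M 2"
  by (simp_all add: rel_def)

lemma rel_unravel:
  "i \<in> {1, 2} \<Longrightarrow> rel (unravel M) i = unravel_edges M i \<union> (unravel_edges M i)\<inverse>"
  by (auto simp: rel_def unravel_def)

lemma rel_in_St: "wf_model M \<Longrightarrow> i \<in> {1, 2} \<Longrightarrow> (s, t) \<in> rel M i \<Longrightarrow> s \<in> St M \<and> t \<in> St M"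
  by (auto simp: rel_def wf_model_def)

lemma dead_end_no_rel: "dead_end M t \<Longrightarrow> i \<in> {1, 2} \<Longrightarrow> (t, u) \<notin> rel M i"
  by (auto simp: dead_end_def rel_def)

lemma quasi_symmetric_rel_sym:
  assumes wf: "wf_model M" and qs: "quasi_symmetric M" and i: "i \<in> {1, 2}"
    and st: "(s, t) \<in> rel M i" and live: "\<not> dead_end M t"
  shows "(t, s) \<in> rel M i"
proof -
  obtain u j where j: "j \<in> {1, 2}" and tu: "(t, u) \<in> rel M j"
    using live unfolding dead_end_def Rel_eq_rel by blast
  have "s \<in> St M" "t \<in> St M" "u \<in> St M"
    using rel_in_St[OF wf i st] rel_in_St[OF wf j tu] by auto
  with qs i j tu st show ?thesis
    unfolding quasi_symmetric_def by blast
qed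

lemma unravel_states_cases:
  "x \<in> unravel_states M \<Longrightarrow> (\<exists>s. x = [(0, s)] \<and> s \<in> St M) \<or>
     (\<exists>k s t. x = [(k, t), (0, s)] \<and> k \<in> {1, 2} \<and> (s, t) \<in> rel M k \<and> dead_end M t)"
  by (auto simp: unravel_states_def)

lemma unravel_rel_in_St:
  assumes wf: "wf_model M" and i: "i \<in> {1, 2}" and xy: "(x, y) \<in> rel (unravel M) i"
  shows "x \<in> St (unravel M) \<and> y \<in> St (unravel M)"
proof -
  have "a \<in> unravel_states M \<and> b \<in> unravel_states M" if "(a, b) \<in> unravel_edges M i" for a b
    using that i rel_in_St[OF wf i] unfolding unravel_edges_def unravel_states_def by blast
  moreover have "St (unravel M) = unravel_states M" by (simp add: unravel_def)
  ultimately show ?thesis using xy i by (auto simp: rel_unravel)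
qed

lemma unravel_rel_from_copy:
  "i \<in> {1, 2} \<Longrightarrow> ([(k, t), (0, s)], y) \<in> rel (unravel M) i \<Longrightarrow> i = k"
  by (auto simp: rel_unravel unravel_edges_def)

lemma unravel_copy_no_common_successor:
  "(x, y) \<in> Rel1 (unravel M) \<Longrightarrow> (x, z) \<in> Rel2 (unravel M) \<Longrightarrow> x \<noteq> [(k, t), (0, s)]"
  using unravel_rel_from_copy[of 1 k t s y M] unravel_rel_from_copy[of 2 k t s z M]
  by (auto simp: Rel_eq_rel)

lemma unravel_rel_from_root:
  assumes "wf_model M" "quasi_symmetric M" "i \<in> {1, 2}"
    and "([(0, s)], y) \<in> rel (unravel M) i"
  shows "(s, unravel_proj y) \<in> rel M i"
  using assms quasi_symmetric_rel_sym[OF assms(1-3)]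
  by (auto simp: rel_unravel unravel_edges_def unravel_proj_def)

lemma unravel_rel_lift:
  assumes "i \<in> {1, 2}" and "(s, t) \<in> rel M i"
  shows "\<exists>y. ([(0, s)], y) \<in> rel (unravel M) i \<and> unravel_proj y = t"
proof (cases "dead_end M t")
  case True
  with assms show ?thesis
    by (intro exI[of _ "[(i, t), (0, s)]"]) (auto simp: rel_unravel unravel_edges_def unravel_proj_def)
next
  case False
  with assms show ?thesis
    by (intro exI[of _ "[(0, t)]"]) (auto simp: rel_unravel unravel_edges_def unravel_proj_def)
qed

lemma unravel_proj_in_St: "wf_model M \<Longrightarrow> x \<in> St (unravel M) \<Longrightarrow> unravel_proj x \<in> St M"
  using rel_in_St by (fastforce simp: unravel_def unravel_proj_def dest: unravel_states_cases)

lemma wf_model_unravel: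
  assumes wf: "wf_model M"
  shows "wf_model (unravel M)"
proof -
  obtain s where "s \<in> St M" using wf by (auto simp: wf_model_def)
  then have "St (unravel M) \<noteq> {}" by (auto simp: unravel_def unravel_states_def)
  moreover have "Rel1 (unravel M) \<subseteq> St (unravel M) \<times> St (unravel M)"
    and "Rel2 (unravel M) \<subseteq> St (unravel M) \<times> St (unravel M)"
    using unravel_rel_in_St[OF wf, of 1] unravel_rel_in_St[OF wf, of 2] by (auto simp: Rel_eq_rel)
  ultimately show ?thesis by (auto simp: wf_model_def unravel_def)
qed

lemma symmetric_model_unravel: "symmetric_model (unravel M)"
  by (auto simp: symmetric_model_def unravel_def sym_def)

lemma unravel_proj_surj:
  assumes "wf_model M"
  shows "unravel_proj ` St (unravel M) = St M"
proof
  show "unravel_proj ` St (unravel M) \<subseteq> St M" using unravel_proj_in_St[OF assms] by auto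
  show "St M \<subseteq> unravel_proj ` St (unravel M)"
  proof
    fix s assume "s \<in> St M"
    then have "[(0, s)] \<in> St (unravel M)" by (auto simp: unravel_def unravel_states_def)
    then show "s \<in> unravel_proj ` St (unravel M)" by (force simp: unravel_proj_def)
  qed
qed

lemma dot_morphism_unravel_proj:
  assumes wf: "wf_model M" and qs: "quasi_symmetric M"
  shows "dot_morphism (unravel M) M unravel_proj"
  unfolding dot_morphism_def
proof (intro conjI ballI allI impI)
  fix x assume "x \<in> St (unravel M)"
  then show "unravel_proj x \<in> St M" using unravel_proj_in_St[OF wf] by blast
next
  fix x p assume "x \<in> St (unravel M)"
  then show "x \<in> Val (unravel M) p \<longleftrightarrow> unravel_proj x \<in> Val M p"
    by (auto simp: unravel_def unravel_proj_def)
next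
  fix x y z
  assume x: "x \<in> St (unravel M)" and xy: "(x, y) \<in> Rel1 (unravel M)" and xz: "(x, z) \<in> Rel2 (unravel M)"
  obtain s where "x = [(0, s)]"
    using unravel_states_cases[of x M] x unravel_copy_no_common_successor[OF xy xz]
    by (auto simp: unravel_def)
  with xy xz show "(unravel_proj x, unravel_proj y) \<in> Rel1 M" "(unravel_proj x, unravel_proj z) \<in> Rel2 M"
    using unravel_rel_from_root[OF wf qs, of 1 s y] unravel_rel_from_root[OF wf qs, of 2 s z]
    by (auto simp: Rel_eq_rel unravel_proj_def)
next
  fix x y' z'
  assume x: "x \<in> St (unravel M)"
    and xy: "(unravel_proj x, y') \<in> Rel1 M" and xz: "(unravel_proj x, z') \<in> Rel2 M"
  \<comment> \<open>copies project onto dead ends, so \<open>x\<close> must be a root\<close>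
  obtain s where xs: "x = [(0, s)]"
    using unravel_states_cases[of x M] x xy dead_end_no_rel[of M _ 1]
    by (auto simp: unravel_def unravel_proj_def Rel_eq_rel)
  obtain y where y: "(x, y) \<in> Rel1 (unravel M)" "unravel_proj y = y'"
    using unravel_rel_lift[of 1 s y' M] xy xs by (auto simp: Rel_eq_rel unravel_proj_def)
  obtain z where z: "(x, z) \<in> Rel2 (unravel M)" "unravel_proj z = z'"
    using unravel_rel_lift[of 2 s z' M] xz xs by (auto simp: Rel_eq_rel unravel_proj_def)
  have "y \<in> St (unravel M)" "z \<in> St (unravel M)"
    using unravel_rel_in_St[OF wf, of 1 x y] unravel_rel_in_St[OF wf, of 2 x z] y z
    by (auto simp: Rel_eq_rel)
  with y z show "\<exists>y\<in>St (unravel M). \<exists>z\<in>St (unravel M). (x, y) \<in> Rel1 (unravel M) \<and>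
      (x, z) \<in> Rel2 (unravel M) \<and> unravel_proj y = y' \<and> unravel_proj z = z'"
    by blast
qed

theorem mainTheorem15:
  fixes M :: "('a, 'p) bimodel"
  assumes "wf_model M" and "quasi_symmetric M"
  shows "\<exists>(Mp :: ((nat \<times> 'a) list, 'p) bimodel) h.
           wf_model Mp \<and> symmetric_model Mp \<and> dot_morphism Mp M h \<and> h ` St Mp = St M \<and>
           (\<forall>x\<in>St Mp. \<forall>\<phi>. sat Mp x \<phi> \<longleftrightarrow> sat M (h x) \<phi>)"
proof (intro exI conjI)
  show wf: "wf_model (unravel M)" using wf_model_unravel[OF assms(1)] .
  show "symmetric_model (unravel M)" by (rule symmetric_model_unravel)
  show mor: "dot_morphism (unravel M) M unravel_proj" using dot_morphism_unravel_proj[OF assms] .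
  show "unravel_proj ` St (unravel M) = St M" using unravel_proj_surj[OF assms(1)] .
  show "\<forall>x\<in>St (unravel M). \<forall>\<phi>. sat (unravel M) x \<phi> \<longleftrightarrow> sat M (unravel_proj x) \<phi>"
    using dot_morphism_sat_iff[OF wf assms(1) mor] by blast
qed

end
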